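(* Let $n\ge 1$ and let $G$ be the graph on the $3n+1$ vertices $c, v_{i,1}, v_{i,2}, v_{i,3}$ ($1\le i\le n$) in which two distinct vertices are adjacent except exactly for the pairs $\{c,v_{i,1}\}$, $\{v_{i,1},v_{i,2}\}$, $\{v_{i,2},v_{i,3}\}$ for $1\le i\le n$ (i.e. $G$ is the complement of a star with $n$ branches of $3$ edges each). Then $\tau(G)=3n-1$, while a minimum connecting transition set of $G$ has size exactly $2n$.
   Context: All graphs are finite, simple and undirected. $G[X]$ denotes the subgraph induced by $X\subseteq V(G)$. The complement $\bar G$ has vertex set $V(G)$ and an edge $xy$ ($x\ne y$) iff $xy\notin E(G)$. A co-connected component of $G$ is (the vertex set of) a connected component of $\bar G$. For a graph $G$, $\tau(G)=\sum_{C}(|C|-2)$ if $G[C]$ connected, $(|C|-1)$ otherwise, the sum over co-connected components $C$ with $|C|\ge 2$. A transition of a graph $G$ is an unordered pair $\{ab,bc\}$ of two distinct edges of $G$ sharing the vertex $b$ (so $a\neq c$); it is written $abc$. A walk in $G$ is a sequence $(v_1,\dots,v_k)$ of vertices with $v_iv_{i+1}\in E(G)$ for all $i\le k-1$. For a set $T$ of transitions of $G$, a walk $(v_1,\dots,v_k)$ is $T$-compatible if for every $i\in[1,k-2]$, either $v_i=v_{i+2}$ or $v_iv_{i+1}v_{i+2}\in T$. $T$ is a connecting transition set of $G$ if for all vertices $u,v$ there is a $T$-compatible walk from $u$ to $v$; a minimum one has minimum cardinality. *)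

theory Defs
  imports Main
begin

text \<open>A finite simple graph is given by a vertex set V and an adjacency relation E
  (symmetric, irreflexive, and only between vertices of V).\<close>

definition compl_adj :: "'a set \<Rightarrow> ('a \<Rightarrow> 'a \<Rightarrow> bool) \<Rightarrow> 'a \<Rightarrow> 'a \<Rightarrow> bool" where
  "compl_adj V E x y \<longleftrightarrow> x \<in> V \<and> y \<in> V \<and> x \<noteq> y \<and> \<not> E x y"

definition cocomps :: "'a set \<Rightarrow> ('a \<Rightarrow> 'a \<Rightarrow> bool) \<Rightarrow> 'a set set" where
  "cocomps V E = {{y \<in> V. (compl_adj V E)\<^sup>*\<^sup>* x y} | x. x \<in> V}"

definition induced_connected :: "('a \<Rightarrow> 'a \<Rightarrow> bool) \<Rightarrow> 'a set \<Rightarrow> bool" where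
  "induced_connected E C \<longleftrightarrow>
     (\<forall>x\<in>C. \<forall>y\<in>C. (\<lambda>a b. a \<in> C \<and> b \<in> C \<and> E a b)\<^sup>*\<^sup>* x y)"

definition tau :: "'a set \<Rightarrow> ('a \<Rightarrow> 'a \<Rightarrow> bool) \<Rightarrow> nat" where
  "tau V E = (\<Sum>C \<in> {C \<in> cocomps V E. card C \<ge> 2}.
                 (if induced_connected E C then card C - 2 else card C - 1))"

text \<open>The transition abc = {ab, bc} is encoded as (b, {a, c}); so abc = cba.\<close>
definition transitions :: "'a set \<Rightarrow> ('a \<Rightarrow> 'a \<Rightarrow> bool) \<Rightarrow> ('a \<times> 'a set) set" where
  "transitions V E = {(b, {a, c}) | a b c. a \<in> V \<and> b \<in> V \<and> c \<in> V \<and>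
                        E a b \<and> E b c \<and> a \<noteq> c}"

definition is_walk :: "'a set \<Rightarrow> ('a \<Rightarrow> 'a \<Rightarrow> bool) \<Rightarrow> 'a list \<Rightarrow> bool" where
  "is_walk V E vs \<longleftrightarrow> vs \<noteq> [] \<and> set vs \<subseteq> V \<and>
      (\<forall>i. Suc i < length vs \<longrightarrow> E (vs ! i) (vs ! Suc i))"

definition compatible :: "('a \<times> 'a set) set \<Rightarrow> 'a list \<Rightarrow> bool" where
  "compatible T vs \<longleftrightarrow> (\<forall>i. i + 2 < length vs \<longrightarrow>
      vs ! i = vs ! (i + 2) \<or> (vs ! (i + 1), {vs ! i, vs ! (i + 2)}) \<in> T)"

definition connecting_transition_set ::
  "'a set \<Rightarrow> ('a \<Rightarrow> 'a \<Rightarrow> bool) \<Rightarrow> ('a \<times> 'a set) set \<Rightarrow> bool" where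
  "connecting_transition_set V E T \<longleftrightarrow> T \<subseteq> transitions V E \<and>
     (\<forall>u\<in>V. \<forall>v\<in>V. \<exists>vs. is_walk V E vs \<and> compatible T vs \<and> hd vs = u \<and> last vs = v)"

text \<open>The concrete graph: c = (0,0), v_{i,j} = (i,j), 1 \<le> i \<le> n, 1 \<le> j \<le> 3.\<close>
definition starV :: "nat \<Rightarrow> (nat \<times> nat) set" where
  "starV n = {(0,0)} \<union> {(i,j). 1 \<le> i \<and> i \<le> n \<and> 1 \<le> j \<and> j \<le> 3}"

definition star_edge :: "nat \<times> nat \<Rightarrow> nat \<times> nat \<Rightarrow> bool" where
  "star_edge x y \<longleftrightarrow> (\<exists>i. 1 \<le> i \<and>
      ((x = (0,0) \<and> y = (i,1)) \<or> (x = (i,1) \<and> y = (i,2)) \<or> (x = (i,2) \<and> y = (i,3))))"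

definition starE :: "nat \<Rightarrow> nat \<times> nat \<Rightarrow> nat \<times> nat \<Rightarrow> bool" where
  "starE n x y \<longleftrightarrow> x \<in> starV n \<and> y \<in> starV n \<and> x \<noteq> y \<and>
      \<not> star_edge x y \<and> \<not> star_edge y x"

end

theory Submission
  imports Defs
begin

text \<open>
  Both G and its complement, the star with centre c, are connected, so \<open>\<tau>(G) = (3n + 1) - 2\<close>.

  For the lower bound, glue the edges of G along the transitions of a connecting set T into
  blocks. A compatible walk never leaves its block, and a block on s vertices costs at least
  s - 2 transitions, since each transition enlarges a block by at most one vertex. Each of the
  3n non-edges of G lies inside some block. A block on s vertices has no isolated vertex, so it
  contains no non-edge if s = 2, at most one if s = 3 (two would share a vertex, which would
  then be isolated), and at most s - 1 in general because the non-edges form a tree. In all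
  cases this is at most 3(s - 2)/2, whence \<open>3n \<le> 3|T|/2\<close>. Conversely the 2n transitions
  \<open>v\<^sub>i\<^sub>1 v\<^sub>i\<^sub>3 c\<close> and \<open>v\<^sub>i\<^sub>2 c v\<^sub>i\<^sub>3\<close> already connect every non-adjacent pair.
\<close>

section \<open>Walks and compatibility\<close>

definition simple_graph :: "'a set \<Rightarrow> ('a \<Rightarrow> 'a \<Rightarrow> bool) \<Rightarrow> bool" where
  "simple_graph V E \<longleftrightarrow> finite V \<and> (\<forall>x y. E x y \<longrightarrow> E y x \<and> x \<noteq> y \<and> x \<in> V \<and> y \<in> V)"

lemma simple_graphD:
  assumes "simple_graph V E" "E x y"
  shows "E y x" "x \<noteq> y" "x \<in> V" "y \<in> V"
  using assms unfolding simple_graph_def by blast+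

lemma simple_graph_finite: "simple_graph V E \<Longrightarrow> finite V"
  unfolding simple_graph_def by blast

lemma finite_transitions: "finite V \<Longrightarrow> finite (transitions V E)"
  by (rule finite_subset[of _ "V \<times> Pow V"]) (auto simp: transitions_def)

lemma transitionsI:
  "\<lbrakk>a \<in> V; b \<in> V; c \<in> V; E a b; E b c; a \<noteq> c\<rbrakk> \<Longrightarrow> (b, {a, c}) \<in> transitions V E"
  unfolding transitions_def by blast

lemma transitionsE:
  assumes "(b, P) \<in> transitions V E"
  obtains a c where "P = {a, c}" "E a b" "E b c" "a \<noteq> c"
  using assms unfolding transitions_def by blast

lemma is_walk_singleton [simp]: "is_walk V E [x] \<longleftrightarrow> x \<in> V"
  by (auto simp: is_walk_def)

lemma is_walk_Cons_Cons [simp]: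
  "is_walk V E (x # y # vs) \<longleftrightarrow> x \<in> V \<and> E x y \<and> is_walk V E (y # vs)"
  by (auto simp: is_walk_def nth_Cons split: nat.splits)

lemma compatible_singleton [simp]: "compatible T [x]"
  and compatible_doubleton [simp]: "compatible T [x, y]"
  by (auto simp: compatible_def)

lemma compatible_Cons_Cons_Cons [simp]:
  "compatible T (x # y # z # vs) \<longleftrightarrow>
     (x = z \<or> (y, {x, z}) \<in> T) \<and> compatible T (y # z # vs)"
proof
  assume h: "compatible T (x # y # z # vs)"
  have "compatible T (y # z # vs)"
    unfolding compatible_def
    using h[unfolded compatible_def, rule_format, of "Suc i" for i] by simp
  then show "(x = z \<or> (y, {x, z}) \<in> T) \<and> compatible T (y # z # vs)"
    using h[unfolded compatible_def, rule_format, of 0] by simp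
next
  assume h: "(x = z \<or> (y, {x, z}) \<in> T) \<and> compatible T (y # z # vs)"
  show "compatible T (x # y # z # vs)"
    unfolding compatible_def
  proof (intro allI impI)
    fix i assume "i + 2 < length (x # y # z # vs)"
    then show "(x # y # z # vs) ! i = (x # y # z # vs) ! (i + 2) \<or>
        ((x # y # z # vs) ! (i + 1), {(x # y # z # vs) ! i, (x # y # z # vs) ! (i + 2)}) \<in> T"
      using h unfolding compatible_def by (cases i) auto
  qed
qed

lemma is_walk_rev:
  assumes "simple_graph V E" "is_walk V E vs"
  shows "is_walk V E (rev vs)"
  unfolding is_walk_def
proof (intro conjI allI impI)
  fix i assume i: "Suc i < length (rev vs)"
  define j where "j = length vs - Suc (Suc i)"
  have "E (vs ! j) (vs ! Suc j)"
    using assms(2) i unfolding is_walk_def j_def by simp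
  moreover have "rev vs ! i = vs ! Suc j" "rev vs ! Suc i = vs ! j"
    using i unfolding j_def by (simp_all add: rev_nth Suc_diff_Suc)
  ultimately show "E (rev vs ! i) (rev vs ! Suc i)"
    using simple_graphD(1)[OF assms(1)] by simp
qed (use assms(2) in \<open>auto simp: is_walk_def\<close>)

lemma compatible_rev:
  assumes "compatible T vs"
  shows "compatible T (rev vs)"
  unfolding compatible_def
proof (intro allI impI)
  fix i assume i: "i + 2 < length (rev vs)"
  define j where "j = length vs - Suc (i + 2)"
  have "j + 2 < length vs" using i unfolding j_def by simp
  then have "vs ! j = vs ! (j + 2) \<or> (vs ! (j + 1), {vs ! j, vs ! (j + 2)}) \<in> T"
    using assms unfolding compatible_def by blast
  moreover have "rev vs ! i = vs ! (j + 2)" "rev vs ! (i + 1) = vs ! (j + 1)"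
    "rev vs ! (i + 2) = vs ! j"
    using i unfolding j_def by (simp_all add: rev_nth Suc_diff_Suc)
  ultimately show "rev vs ! i = rev vs ! (i + 2) \<or>
      (rev vs ! (i + 1), {rev vs ! i, rev vs ! (i + 2)}) \<in> T"
    by (auto simp: insert_commute)
qed

definition compatible_walk ::
  "'a set \<Rightarrow> ('a \<Rightarrow> 'a \<Rightarrow> bool) \<Rightarrow> ('a \<times> 'a set) set \<Rightarrow> 'a \<Rightarrow> 'a \<Rightarrow> bool" where
  "compatible_walk V E T u v \<longleftrightarrow>
     (\<exists>vs. is_walk V E vs \<and> compatible T vs \<and> hd vs = u \<and> last vs = v)"

lemma compatible_walkI:
  "\<lbrakk>is_walk V E vs; compatible T vs; hd vs = u; last vs = v\<rbrakk> \<Longrightarrow> compatible_walk V E T u v"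
  unfolding compatible_walk_def by blast

lemma compatible_walk_sym:
  assumes "simple_graph V E" "compatible_walk V E T u v"
  shows "compatible_walk V E T v u"
proof -
  obtain vs where "is_walk V E vs" "compatible T vs" "hd vs = u" "last vs = v"
    using assms(2) unfolding compatible_walk_def by blast
  moreover have "vs \<noteq> []" using \<open>is_walk V E vs\<close> unfolding is_walk_def by blast
  ultimately show ?thesis
    by (intro compatible_walkI[of V E "rev vs"])
       (auto simp: is_walk_rev[OF assms(1)] compatible_rev hd_rev last_rev)
qed

lemma connecting_transition_set_iff:
  "connecting_transition_set V E T \<longleftrightarrow>
     T \<subseteq> transitions V E \<and> (\<forall>u\<in>V. \<forall>v\<in>V. compatible_walk V E T u v)"
  unfolding connecting_transition_set_def compatible_walk_def ..

lemma connecting_transition_setI: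
  assumes "simple_graph V E" "T \<subseteq> transitions V E"
    and nonadjacent: "\<And>u v. \<lbrakk>u \<in> V; v \<in> V; u \<noteq> v; \<not> E u v\<rbrakk> \<Longrightarrow>
       compatible_walk V E T u v \<or> compatible_walk V E T v u"
  shows "connecting_transition_set V E T"
  unfolding connecting_transition_set_iff
proof (intro conjI assms(2) ballI)
  fix u v assume uv: "u \<in> V" "v \<in> V"
  consider "u = v" | "E u v" | "u \<noteq> v" "\<not> E u v" by blast
  then show "compatible_walk V E T u v"
  proof cases
    case 1 then show ?thesis using uv by (intro compatible_walkI[of V E "[u]"]) auto
  next
    case 2 then show ?thesis using uv by (intro compatible_walkI[of V E "[u, v]"]) auto
  next
    case 3 then show ?thesis using nonadjacent[OF uv 3] compatible_walk_sym[OF assms(1)] by blast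
  qed
qed

section \<open>Blocks of a transition set\<close>

definition edges :: "('a \<Rightarrow> 'a \<Rightarrow> bool) \<Rightarrow> 'a set set" where
  "edges E = {{x, y} | x y. E x y}"

definition no_isolated_vertex :: "('a \<Rightarrow> 'a \<Rightarrow> bool) \<Rightarrow> 'a set \<Rightarrow> bool" where
  "no_isolated_vertex E S \<longleftrightarrow> (\<forall>v\<in>S. \<exists>w\<in>S. E v w)"

definition excess :: "'a set set \<Rightarrow> nat" where
  "excess F = (\<Sum>S\<in>F. card S - 2)"

text \<open>\<open>blk\<close> sends each edge to the vertex set of its block, the blocks being unions of edges
  glued along the transitions of T; only the closure properties are required.\<close>

definition block_map ::
  "'a set \<Rightarrow> ('a \<Rightarrow> 'a \<Rightarrow> bool) \<Rightarrow> ('a \<times> 'a set) set \<Rightarrow> ('a set \<Rightarrow> 'a set) \<Rightarrow> bool" where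
  "block_map V E T blk \<longleftrightarrow>
     (\<forall>x y. E x y \<longrightarrow> {x, y} \<subseteq> blk {x, y} \<and> blk {x, y} \<subseteq> V \<and> no_isolated_vertex E (blk {x, y})) \<and>
     (\<forall>x y z. (y, {x, z}) \<in> T \<longrightarrow> blk {x, y} = blk {y, z})"

lemma finite_edges:
  assumes "simple_graph V E"
  shows "finite (edges E)"
proof (rule finite_subset)
  show "edges E \<subseteq> Pow V"
    unfolding edges_def using simple_graphD(3,4)[OF assms] by blast
  show "finite (Pow V)" using simple_graph_finite[OF assms] by simp
qed

lemma block_map_empty:
  assumes "simple_graph V E"
  shows "block_map V E {} id"
  unfolding block_map_def no_isolated_vertex_def
proof (intro conjI allI impI)
  fix x y assume "E x y"
  then show "{x, y} \<subseteq> id {x, y}" "id {x, y} \<subseteq> V" "\<forall>v\<in>id {x, y}. \<exists>w\<in>id {x, y}. E v w"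
    using simple_graphD[OF assms] by auto
qed simp

lemma excess_edges: "excess (edges E) = 0"
  unfolding excess_def
proof (rule sum.neutral, rule ballI)
  fix S assume "S \<in> edges E"
  then obtain x y where "S = {x, y}" unfolding edges_def by blast
  then show "card S - 2 = 0" by (simp add: card_insert_if)
qed

lemma block_map_insert_same:
  assumes "block_map V E T blk" "blk {x, y} = blk {y, z}"
  shows "block_map V E (insert (y, {x, z}) T) blk"
  unfolding block_map_def
proof (intro conjI allI impI)
  fix a b c assume "(b, {a, c}) \<in> insert (y, {x, z}) T"
  then consider "(b, {a, c}) \<in> T" | "b = y" "a = x" "c = z" | "b = y" "a = z" "c = x"
    by (auto simp: doubleton_eq_iff)
  then show "blk {a, b} = blk {b, c}"
  proof cases
    case 1 then show ?thesis using assms(1) unfolding block_map_def by blast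
  next
    case 2 then show ?thesis using assms(2) by simp
  next
    case 3
    have "{z, y} = {y, z}" "{y, x} = {x, y}" by blast+
    then show ?thesis using assms(2) 3 by simp
  qed
qed (use assms(1) in \<open>auto simp: block_map_def\<close>)

definition merge_blocks :: "('e \<Rightarrow> 'a set) \<Rightarrow> 'a set \<Rightarrow> 'a set \<Rightarrow> 'e \<Rightarrow> 'a set" where
  "merge_blocks blk A B e = (if blk e = A \<or> blk e = B then A \<union> B else blk e)"

lemma block_map_merge:
  assumes "block_map V E T blk" "E x y" "E y z"
  shows "block_map V E (insert (y, {x, z}) T) (merge_blocks blk (blk {x, y}) (blk {y, z}))"
    (is "block_map V E _ ?blk")
proof -
  let ?A = "blk {x, y}" and ?B = "blk {y, z}"
  have A: "?A \<subseteq> V" "no_isolated_vertex E ?A" and B: "?B \<subseteq> V" "no_isolated_vertex E ?B"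
    using assms unfolding block_map_def by blast+
  have "block_map V E T ?blk"
    unfolding block_map_def
  proof (intro conjI allI impI)
    fix a b assume "E a b"
    then have ab: "{a, b} \<subseteq> blk {a, b}" "blk {a, b} \<subseteq> V" "no_isolated_vertex E (blk {a, b})"
      using assms(1) unfolding block_map_def by blast+
    show "{a, b} \<subseteq> ?blk {a, b}" using ab(1) by (auto simp: merge_blocks_def)
    show "?blk {a, b} \<subseteq> V" using ab(2) A(1) B(1) by (simp add: merge_blocks_def)
    show "no_isolated_vertex E (?blk {a, b})"
      using ab(3) A(2) B(2) by (auto simp: merge_blocks_def no_isolated_vertex_def)
  next
    fix a b c assume "(b, {a, c}) \<in> T"
    then have "blk {a, b} = blk {b, c}" using assms(1) unfolding block_map_def by blast
    then show "?blk {a, b} = ?blk {b, c}" by (simp add: merge_blocks_def)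
  qed
  moreover have "?blk {x, y} = ?blk {y, z}" by (simp add: merge_blocks_def)
  ultimately show ?thesis by (rule block_map_insert_same)
qed

lemma excess_merge_blocks_le:
  assumes "finite D" "A \<in> blk ` D" "B \<in> blk ` D" "A \<noteq> B" "A \<inter> B \<noteq> {}"
    "finite A" "finite B" "2 \<le> card A" "2 \<le> card B"
  shows "excess (merge_blocks blk A B ` D) \<le> excess (blk ` D) + 1"
proof -
  let ?f = "\<lambda>S. card S - 2" and ?R = "blk ` D - {A, B}"
  have "merge_blocks blk A B ` D \<subseteq> insert (A \<union> B) ?R"
    by (auto simp: merge_blocks_def)
  then have "(\<Sum>S\<in>merge_blocks blk A B ` D. ?f S) \<le> (\<Sum>S\<in>insert (A \<union> B) ?R. ?f S)"
    by (rule sum_mono2[rotated]) (use assms(1) in auto)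
  also have "\<dots> \<le> ?f (A \<union> B) + (\<Sum>S\<in>?R. ?f S)"
    using assms(1) by (simp add: sum.insert_if)
  finally have merged: "(\<Sum>S\<in>merge_blocks blk A B ` D. ?f S) \<le> ?f (A \<union> B) + (\<Sum>S\<in>?R. ?f S)" .
  have "card A + card B = card (A \<union> B) + card (A \<inter> B)" by (rule card_Un_Int) fact+
  moreover have "card (A \<inter> B) \<noteq> 0" using assms(5,6) by simp
  ultimately have union: "?f (A \<union> B) \<le> ?f A + ?f B + 1" using assms(8,9) by linarith
  have "(\<Sum>S\<in>blk ` D. ?f S) = ?f A + (\<Sum>S\<in>blk ` D - {A}. ?f S)"
    using assms(1,2) by (simp add: sum.remove)
  also have "(\<Sum>S\<in>blk ` D - {A}. ?f S) = ?f B + (\<Sum>S\<in>?R. ?f S)"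
    using sum.remove[of "blk ` D - {A}" B ?f] assms(1,3,4) by (simp add: Diff_insert2[symmetric])
  finally have "(\<Sum>S\<in>blk ` D. ?f S) = ?f A + ?f B + (\<Sum>S\<in>?R. ?f S)" by simp
  with merged union show ?thesis unfolding excess_def by linarith
qed

lemma block_map_block:
  assumes "simple_graph V E" "block_map V E T blk" "E x y"
  shows "{x, y} \<subseteq> blk {x, y}" "blk {x, y} \<subseteq> V" "finite (blk {x, y})" "2 \<le> card (blk {x, y})"
proof -
  show sub: "{x, y} \<subseteq> blk {x, y}" and V: "blk {x, y} \<subseteq> V"
    using assms(2,3) unfolding block_map_def by blast+
  show fin: "finite (blk {x, y})"
    using V simple_graph_finite[OF assms(1)] by (rule finite_subset)
  have "card {x, y} = 2" using simple_graphD(2)[OF assms(1,3)] by simp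
  then show "2 \<le> card (blk {x, y})" using card_mono[OF fin sub] by simp
qed

text \<open>A new transition either lies inside one block or merges the two blocks through its middle
  vertex; in the second case the excess grows by at most one.\<close>

lemma block_map_exists:
  assumes "simple_graph V E" "finite T" "T \<subseteq> transitions V E"
  shows "\<exists>blk. block_map V E T blk \<and> excess (blk ` edges E) \<le> card T"
  using assms(2,3)
proof (induction T rule: finite_induct)
  case empty
  have "excess (id ` edges E) = 0" using excess_edges by simp
  then show ?case using block_map_empty[OF assms(1)] by (intro exI[of _ id]) (simp del: id_apply)
next
  case (insert t T)
  have "T \<subseteq> transitions V E" using insert.prems by simp
  with insert.IH obtain blk where blk: "block_map V E T blk"
    and excess: "excess (blk ` edges E) \<le> card T" by blast
  obtain y P where "t = (y, P)" "(y, P) \<in> transitions V E"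
    using insert.prems by (cases t) simp
  then obtain x z where t: "t = (y, {x, z})" and xy: "E x y" and yz: "E y z"
    by (auto elim: transitionsE)
  have card: "card (insert t T) = card T + 1" using insert.hyps by simp
  show ?case
  proof (cases "blk {x, y} = blk {y, z}")
    case True
    show ?thesis
    proof (intro exI conjI)
      show "block_map V E (insert t T) blk" using block_map_insert_same[OF blk True] t by simp
      show "excess (blk ` edges E) \<le> card (insert t T)" using excess card by simp
    qed
  next
    case False
    note A = block_map_block[OF assms(1) blk xy] and B = block_map_block[OF assms(1) blk yz]
    let ?blk = "merge_blocks blk (blk {x, y}) (blk {y, z})"
    have excess_merged: "excess (?blk ` edges E) \<le> excess (blk ` edges E) + 1"
    proof (rule excess_merge_blocks_le)
      show "blk {x, y} \<in> blk ` edges E" "blk {y, z} \<in> blk ` edges E"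
        using xy yz unfolding edges_def by blast+
      show "blk {x, y} \<inter> blk {y, z} \<noteq> {}" using A(1) B(1) by blast
    qed (fact finite_edges[OF assms(1)] False A(3,4) B(3,4))+
    show ?thesis
    proof (intro exI conjI)
      show "block_map V E (insert t T) ?blk" using block_map_merge[OF blk xy yz] t by simp
      show "excess (?blk ` edges E) \<le> card (insert t T)"
        using excess_merged excess card by linarith
    qed
  qed
qed

lemma block_map_walk_edge:
  assumes "block_map V E T blk" "compatible T vs" "Suc k < length vs"
  shows "blk {vs ! k, vs ! Suc k} = blk {vs ! 0, vs ! 1}"
  using assms(3)
proof (induction k)
  case (Suc k)
  have "k + 2 < length vs" using Suc.prems by simp
  then have "vs ! k = vs ! (k + 2) \<or> (vs ! (k + 1), {vs ! k, vs ! (k + 2)}) \<in> T"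
    using assms(2) unfolding compatible_def by blast
  then have "blk {vs ! k, vs ! Suc k} = blk {vs ! Suc k, vs ! Suc (Suc k)}"
  proof
    assume "vs ! k = vs ! (k + 2)"
    then have "{vs ! Suc k, vs ! Suc (Suc k)} = {vs ! k, vs ! Suc k}"
      by (simp add: insert_commute)
    then show ?thesis by simp
  next
    assume "(vs ! (k + 1), {vs ! k, vs ! (k + 2)}) \<in> T"
    then have "blk {vs ! k, vs ! (k + 1)} = blk {vs ! (k + 1), vs ! (k + 2)}"
      using assms(1) unfolding block_map_def by blast
    then show ?thesis by (simp add: numeral_2_eq_2)
  qed
  with Suc show ?case by simp
qed simp

lemma block_map_compatible_walk:
  assumes "block_map V E T blk" "compatible_walk V E T u v" "u \<noteq> v"
  obtains S where "S \<in> blk ` edges E" "u \<in> S" "v \<in> S"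
proof -
  obtain vs where walk: "is_walk V E vs" "compatible T vs" and ends: "hd vs = u" "last vs = v"
    using assms(2) unfolding compatible_walk_def by blast
  have "vs \<noteq> []" using walk(1) unfolding is_walk_def by blast
  moreover have "length vs \<noteq> 1"
    using ends assms(3) by (cases vs) auto
  ultimately have "2 \<le> length vs" by (cases vs) (auto simp: Suc_le_eq)
  define k where "k = length vs - 2"
  have k: "Suc k < length vs" "Suc k = length vs - 1" using \<open>2 \<le> length vs\<close> unfolding k_def by auto
  have first: "E (vs ! 0) (vs ! 1)" and lst: "E (vs ! k) (vs ! Suc k)"
    using walk(1) k(1) unfolding is_walk_def by auto
  have "u = vs ! 0" using ends(1) \<open>vs \<noteq> []\<close> by (simp add: hd_conv_nth)
  moreover have "v = vs ! Suc k" using ends(2) \<open>vs \<noteq> []\<close> k(2) by (simp add: last_conv_nth)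
  moreover have "vs ! 0 \<in> blk {vs ! 0, vs ! 1}" "vs ! Suc k \<in> blk {vs ! k, vs ! Suc k}"
    using first lst assms(1) unfolding block_map_def by blast+
  moreover have "blk {vs ! k, vs ! Suc k} = blk {vs ! 0, vs ! 1}"
    by (rule block_map_walk_edge[OF assms(1) walk(2) k(1)])
  moreover have "blk {vs ! 0, vs ! 1} \<in> blk ` edges E"
    using first unfolding edges_def by blast
  ultimately show ?thesis using that[of "blk {vs ! 0, vs ! 1}"] by simp
qed

section \<open>Forests of non-edges\<close>

definition nonadjacent_pairs :: "('a \<Rightarrow> 'a \<Rightarrow> bool) \<Rightarrow> 'a set \<Rightarrow> 'a set set" where
  "nonadjacent_pairs E S = {{x, y} | x y. x \<in> S \<and> y \<in> S \<and> x \<noteq> y \<and> \<not> E x y}"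

definition children_within :: "'a set \<Rightarrow> ('a \<Rightarrow> 'a) \<Rightarrow> 'a set \<Rightarrow> 'a set" where
  "children_within C par S = {x \<in> C. x \<in> S \<and> par x \<in> S}"

lemma finite_nonadjacent_pairs: "finite S \<Longrightarrow> finite (nonadjacent_pairs E S)"
  by (rule finite_subset[of _ "Pow S"]) (auto simp: nonadjacent_pairs_def)

lemma nonadjacent_pairs_card_2_empty:
  assumes "simple_graph V E" "card S = 2" "no_isolated_vertex E S"
  shows "nonadjacent_pairs E S = {}"
proof -
  obtain a b where S: "S = {a, b}" "a \<noteq> b" using assms(2) by (auto simp: card_2_iff)
  then obtain w where "w \<in> {a, b}" "E a w" using assms(3) unfolding no_isolated_vertex_def by blast
  then have "E a b" "E b a" using simple_graphD[OF assms(1)] by blast+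
  then show ?thesis unfolding nonadjacent_pairs_def S(1) by blast
qed

lemma nonadjacent_pair_third_vertex:
  assumes "simple_graph V E" "finite S" "card S = 3" "no_isolated_vertex E S"
    and "x \<in> S" "y \<in> S" "z \<in> S" "x \<noteq> y" "z \<noteq> x" "z \<noteq> y" "\<not> E x y"
  shows "E x z"
proof -
  obtain w where w: "w \<in> S" "E x w" using assms(4,5) unfolding no_isolated_vertex_def by blast
  have "w \<noteq> x" "w \<noteq> y" using w(2) assms(11) simple_graphD(2)[OF assms(1)] by blast+
  have "card {x, y, z} = 3" using assms(8-10) by simp
  then have "S = {x, y, z}" using assms(2,3,5-7) by (metis card_subset_eq empty_subsetI insert_subset)
  then have "w = z" using w(1) \<open>w \<noteq> x\<close> \<open>w \<noteq> y\<close> by blast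
  then show ?thesis using w(2) by simp
qed

text \<open>Two distinct non-adjacent pairs in a 3-set share a vertex, and that vertex would be isolated.\<close>

lemma card_nonadjacent_pairs_card_3_le:
  assumes "simple_graph V E" "finite S" "card S = 3" "no_isolated_vertex E S"
  shows "card (nonadjacent_pairs E S) \<le> 1"
proof -
  note third = nonadjacent_pair_third_vertex[OF assms]
  have sym: "E x y \<Longrightarrow> E y x" for x y using simple_graphD(1)[OF assms(1)] .
  have "P = Q" if pairs: "P \<in> nonadjacent_pairs E S" "Q \<in> nonadjacent_pairs E S" for P Q
  proof -
    obtain x y u v where P: "P = {x, y}" "x \<in> S" "y \<in> S" "x \<noteq> y" "\<not> E x y"
      and Q: "Q = {u, v}" "u \<in> S" "v \<in> S" "u \<noteq> v" "\<not> E u v"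
      using pairs unfolding nonadjacent_pairs_def by blast
    have outside: "S = {x, y, w}" "E x w" "E y w" if "w \<in> S" "w \<notin> P" for w
    proof -
      have "card {x, y, w} = 3" using that P(1,4) by auto
      then show "S = {x, y, w}"
        using assms(2,3) P(2,3) that(1) by (metis card_subset_eq empty_subsetI insert_subset)
      show "E x w" "E y w" using third[of x y w] third[of y x w] P that sym by auto
    qed
    have "u \<in> P" "v \<in> P"
      using outside[of u] outside[of v] Q sym by (metis insertE singletonD)+
    then show ?thesis using P(1) Q(1,4) by auto
  qed
  then show ?thesis
    using finite_nonadjacent_pairs[OF assms(2), of E] by (simp add: card_le_Suc0_iff_eq)
qed

lemma card_children_within_le_nonadjacent_pairs:
  fixes rank :: "'a \<Rightarrow> 'b::order"
  assumes "finite S" and forest: "\<forall>x\<in>C. rank (par x) < rank x \<and> \<not> E x (par x)"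
  shows "card (children_within C par S) \<le> card (nonadjacent_pairs E S)"
proof (rule card_inj_on_le)
  show "inj_on (\<lambda>x. {x, par x}) (children_within C par S)"
  proof (rule inj_onI)
    fix x y assume "x \<in> children_within C par S" "y \<in> children_within C par S"
      and eq: "{x, par x} = {y, par y}"
    then have "rank (par x) < rank x" "rank (par y) < rank y"
      using forest unfolding children_within_def by auto
    then show "x = y" using eq by (auto simp: doubleton_eq_iff dest: order.asym)
  qed
  show "(\<lambda>x. {x, par x}) ` children_within C par S \<subseteq> nonadjacent_pairs E S"
    using forest unfolding children_within_def nonadjacent_pairs_def by force
  show "finite (nonadjacent_pairs E S)" using assms(1) by (rule finite_nonadjacent_pairs)
qed

lemma card_children_within_le:
  fixes rank :: "'a \<Rightarrow> 'b::order"
  assumes "finite S" and forest: "\<forall>x\<in>C. rank (par x) < rank x"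
  shows "card (children_within C par S) \<le> card S - 1"
proof (cases "S = {}")
  case False
  let ?r = "arg_min_on rank S"
  have "children_within C par S \<subseteq> S - {?r}"
    using forest arg_min_if_finite(2)[OF assms(1) False, of rank]
    unfolding children_within_def by force
  then have "card (children_within C par S) \<le> card (S - {?r})"
    using assms(1) by (intro card_mono) auto
  also have "\<dots> = card S - 1"
    using arg_min_if_finite(1)[OF assms(1) False, of rank] assms(1) by simp
  finally show ?thesis .
qed (simp add: children_within_def)

lemma card_children_within_le_excess:
  fixes rank :: "'a \<Rightarrow> 'b::order"
  assumes "simple_graph V E" "S \<subseteq> V" "no_isolated_vertex E S"
    and forest: "\<forall>x\<in>C. rank (par x) < rank x \<and> \<not> E x (par x)"
  shows "2 * card (children_within C par S) \<le> 3 * (card S - 2)"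
proof -
  have fin: "finite S" using assms(2) simple_graph_finite[OF assms(1)] by (rule finite_subset)
  have le_pairs: "card (children_within C par S) \<le> card (nonadjacent_pairs E S)"
    using fin forest by (rule card_children_within_le_nonadjacent_pairs)
  have le_card: "card (children_within C par S) \<le> card S - 1"
    using fin forest by (intro card_children_within_le) auto
  consider "card S \<le> 1" | "card S = 2" | "card S = 3" | "4 \<le> card S" by linarith
  then show ?thesis
  proof cases
    case 2 then show ?thesis using le_pairs nonadjacent_pairs_card_2_empty[OF assms(1) _ assms(3)] by simp
  next
    case 3 then show ?thesis using le_pairs card_nonadjacent_pairs_card_3_le[OF assms(1) fin _ assms(3)] by simp
  qed (use le_card in auto)
qed

text \<open>The pairs \<open>{x, par x}\<close> for \<open>x \<in> C\<close> are non-edges forming a forest, with the rank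
  decreasing towards the roots.\<close>

theorem connecting_transition_set_card_lower_bound:
  fixes rank :: "'a \<Rightarrow> 'b::order"
  assumes "simple_graph V E" "connecting_transition_set V E T" "C \<subseteq> V"
    and forest: "\<forall>x\<in>C. par x \<in> V \<and> rank (par x) < rank x \<and> \<not> E x (par x)"
  shows "2 * card C \<le> 3 * card T"
proof -
  have T: "T \<subseteq> transitions V E"
    using assms(2) unfolding connecting_transition_set_iff by blast
  moreover have "finite T"
    using T finite_transitions[OF simple_graph_finite[OF assms(1)]] by (rule finite_subset)
  ultimately obtain blk where blk: "block_map V E T blk"
    and excess: "excess (blk ` edges E) \<le> card T"
    using block_map_exists[OF assms(1)] by blast
  let ?F = "blk ` edges E" and ?Q = "children_within C par"
  have finF: "finite ?F" using finite_edges[OF assms(1)] by simp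
  have "C \<subseteq> (\<Union>S\<in>?F. ?Q S)"
  proof
    fix x assume x: "x \<in> C"
    then have "compatible_walk V E T x (par x)" "x \<noteq> par x"
      using assms(2,3) forest unfolding connecting_transition_set_iff
      by (auto dest: order.strict_implies_not_eq)
    then obtain S where "S \<in> ?F" "x \<in> S" "par x \<in> S"
      using block_map_compatible_walk[OF blk] by blast
    then show "x \<in> (\<Union>S\<in>?F. ?Q S)" using x unfolding children_within_def by blast
  qed
  moreover have "(\<Union>S\<in>?F. ?Q S) \<subseteq> C" unfolding children_within_def by blast
  ultimately have "card C \<le> (\<Sum>S\<in>?F. card (?Q S))"
    using card_UN_le[OF finF, of ?Q] by (metis subset_antisym)
  then have "2 * card C \<le> (\<Sum>S\<in>?F. 2 * card (?Q S))" by (simp add: sum_distrib_left[symmetric])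
  also have "\<dots> \<le> (\<Sum>S\<in>?F. 3 * (card S - 2))"
  proof (rule sum_mono)
    fix S assume "S \<in> ?F"
    then obtain x y where "E x y" "S = blk {x, y}" unfolding edges_def by blast
    then have "S \<subseteq> V" "no_isolated_vertex E S" using blk unfolding block_map_def by blast+
    then show "2 * card (?Q S) \<le> 3 * (card S - 2)"
      using card_children_within_le_excess[OF assms(1)] forest by blast
  qed
  also have "\<dots> \<le> 3 * card T" using excess unfolding excess_def by (simp add: sum_distrib_left[symmetric])
  finally show ?thesis .
qed

section \<open>The complement of a star\<close>

lemma cocomps_eq_if_complement_connected:
  assumes "V \<noteq> {}" "\<forall>x\<in>V. \<forall>y\<in>V. (compl_adj V E)\<^sup>*\<^sup>* x y"
  shows "cocomps V E = {V}"
  using assms unfolding cocomps_def by auto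

lemma tau_eq_if_connected_and_co_connected:
  assumes "2 \<le> card V" "\<forall>x\<in>V. \<forall>y\<in>V. (compl_adj V E)\<^sup>*\<^sup>* x y" "induced_connected E V"
  shows "tau V E = card V - 2"
proof -
  have "V \<noteq> {}" using assms(1) by auto
  then have "{C \<in> cocomps V E. 2 \<le> card C} = {V}"
    using cocomps_eq_if_complement_connected[OF _ assms(2)] assms(1) by auto
  then show ?thesis unfolding tau_def using assms(3) by simp
qed

lemma rtranclp_via_hub:
  assumes "symp R" "R\<^sup>*\<^sup>* h x" "R\<^sup>*\<^sup>* h y"
  shows "R\<^sup>*\<^sup>* x y"
  using assms by (meson rtranclp_trans symp_rtranclp sympD)

lemma starV_eq: "starV n = insert (0, 0) ({1..n} \<times> {1..3})"
  by (auto simp: starV_def)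

lemma card_starV: "card (starV n) = 3 * n + 1"
  unfolding starV_eq by (simp add: card_cartesian_product)

lemma simple_graph_star: "simple_graph (starV n) (starE n)"
  unfolding simple_graph_def starE_def by (auto simp: starV_eq)

lemma starE_hub:
  assumes "1 \<le> i" "i \<le> n"
  shows "starE n (0, 0) (i, 2)" "starE n (0, 0) (i, 3)" "starE n (i, 3) (i, 1)"
    and "starE n (i, 2) (0, 0)" "starE n (i, 3) (0, 0)" "starE n (i, 1) (i, 3)"
  using assms by (auto simp: starE_def starV_def star_edge_def)

lemma compl_adj_star_iff:
  "compl_adj (starV n) (starE n) x y \<longleftrightarrow>
     x \<in> starV n \<and> y \<in> starV n \<and> (star_edge x y \<or> star_edge y x)"
  unfolding compl_adj_def starE_def star_edge_def by auto

lemma star_complement_connected: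
  assumes "x \<in> starV n" "y \<in> starV n"
  shows "(compl_adj (starV n) (starE n))\<^sup>*\<^sup>* x y"
proof (rule rtranclp_via_hub)
  show "symp (compl_adj (starV n) (starE n))"
    by (auto simp: symp_def compl_adj_star_iff)
  have "(compl_adj (starV n) (starE n))\<^sup>*\<^sup>* (0, 0) (i, j)" if "1 \<le> i" "i \<le> n" "j \<in> {1..3}" for i j
  proof -
    have step: "compl_adj (starV n) (starE n) (0, 0) (i, 1)"
      "compl_adj (starV n) (starE n) (i, 1) (i, 2)" "compl_adj (starV n) (starE n) (i, 2) (i, 3)"
      using that unfolding compl_adj_star_iff by (auto simp: star_edge_def starV_def)
    from that(3) consider "j = 1" | "j = 2" | "j = 3" by force
    then show ?thesis by cases (use step in \<open>auto intro: rtranclp.rtrancl_into_rtrancl\<close>)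
  qed
  then show "(compl_adj (starV n) (starE n))\<^sup>*\<^sup>* (0, 0) x" "(compl_adj (starV n) (starE n))\<^sup>*\<^sup>* (0, 0) y"
    using assms unfolding starV_eq by auto
qed

lemma star_connected: "induced_connected (starE n) (starV n)"
proof -
  have restrict: "(\<lambda>a b. a \<in> starV n \<and> b \<in> starV n \<and> starE n a b) = starE n"
    by (auto simp: starE_def fun_eq_iff)
  have "(starE n)\<^sup>*\<^sup>* (0, 0) (i, j)" if "1 \<le> i" "i \<le> n" "j \<in> {1..3}" for i j
  proof -
    note hub = starE_hub[OF that(1,2)]
    from that(3) consider "j = 1" | "j = 2" | "j = 3" by force
    then show ?thesis by cases (use hub in \<open>auto intro: rtranclp.rtrancl_into_rtrancl\<close>)
  qed
  then have "(starE n)\<^sup>*\<^sup>* (0, 0) x" if "x \<in> starV n" for x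
    using that unfolding starV_eq by auto
  moreover have "symp (starE n)" by (auto simp: symp_def starE_def)
  ultimately show ?thesis
    unfolding induced_connected_def restrict by (blast intro: rtranclp_via_hub)
qed

lemma tau_star:
  assumes "1 \<le> n"
  shows "tau (starV n) (starE n) = 3 * n - 1"
  using tau_eq_if_connected_and_co_connected[OF _ _ star_connected] star_complement_connected
    card_starV assms by simp

definition star_transitions :: "nat \<Rightarrow> ((nat \<times> nat) \<times> (nat \<times> nat) set) set" where
  "star_transitions n =
     (\<lambda>i. ((i, 3), {(i, 1), (0, 0)})) ` {1..n} \<union> (\<lambda>i. ((0, 0), {(i, 2), (i, 3)})) ` {1..n}"

lemma card_star_transitions: "card (star_transitions n) = 2 * n"
proof -
  define f g :: "nat \<Rightarrow> (nat \<times> nat) \<times> (nat \<times> nat) set"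
    where "f i = ((i, 3), {(i, 1), (0, 0)})" and "g i = ((0, 0), {(i, 2), (i, 3)})" for i
  have inj: "inj_on f {1..n}" "inj_on g {1..n}"
    unfolding f_def g_def by (auto simp: inj_on_def doubleton_eq_iff)
  have "f i \<noteq> g j" for i j by (simp add: f_def g_def)
  then have disjoint: "f ` {1..n} \<inter> g ` {1..n} = {}" by blast
  have "star_transitions n = f ` {1..n} \<union> g ` {1..n}"
    unfolding star_transitions_def f_def g_def ..
  then show ?thesis using inj disjoint by (simp add: card_Un_disjoint card_image)
qed

lemma star_transitions_subset: "star_transitions n \<subseteq> transitions (starV n) (starE n)"
proof -
  have "((i, 3), {(i, 1), (0, 0)}) \<in> transitions (starV n) (starE n)"
    "((0, 0), {(i, 2), (i, 3)}) \<in> transitions (starV n) (starE n)" if "1 \<le> i" "i \<le> n" for i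
    using starE_hub[OF that] that by (auto intro!: transitionsI simp: starV_def)
  then show ?thesis unfolding star_transitions_def by auto
qed

lemma star_transitions_walk:
  assumes "star_edge u v" "u \<in> starV n" "v \<in> starV n"
  shows "compatible_walk (starV n) (starE n) (star_transitions n) u v"
proof -
  obtain i where i: "1 \<le> i"
    "(u = (0, 0) \<and> v = (i, 1)) \<or> (u = (i, 1) \<and> v = (i, 2)) \<or> (u = (i, 2) \<and> v = (i, 3))"
    using assms(1) unfolding star_edge_def by blast
  then have "i \<le> n" using assms(2,3) by (auto simp: starV_def)
  note hub = starE_hub[OF i(1) this]
  have V: "(0, 0) \<in> starV n" "(i, 1) \<in> starV n" "(i, 2) \<in> starV n" "(i, 3) \<in> starV n"
    using i(1) \<open>i \<le> n\<close> by (auto simp: starV_def)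
  have T: "((i, 3), {(0, 0), (i, 1)}) \<in> star_transitions n"
    "((i, 3), {(i, 1), (0, 0)}) \<in> star_transitions n"
    "((0, 0), {(i, 3), (i, 2)}) \<in> star_transitions n"
    "((0, 0), {(i, 2), (i, 3)}) \<in> star_transitions n"
    using i(1) \<open>i \<le> n\<close> unfolding star_transitions_def by (auto simp: insert_commute)
  from i(2) show ?thesis
  proof (elim disjE conjE)
    assume "u = (0, 0)" "v = (i, 1)"
    then show ?thesis using hub V T by (intro compatible_walkI[of _ _ "[(0, 0), (i, 3), (i, 1)]"]) auto
  next
    assume "u = (i, 1)" "v = (i, 2)"
    then show ?thesis using hub V T
      by (intro compatible_walkI[of _ _ "[(i, 1), (i, 3), (0, 0), (i, 2)]"]) auto
  next
    assume "u = (i, 2)" "v = (i, 3)"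
    then show ?thesis using hub V T by (intro compatible_walkI[of _ _ "[(i, 2), (0, 0), (i, 3)]"]) auto
  qed
qed

lemma connecting_star_transitions:
  "connecting_transition_set (starV n) (starE n) (star_transitions n)"
proof (rule connecting_transition_setI[OF simple_graph_star star_transitions_subset])
  fix u v assume "u \<in> starV n" "v \<in> starV n" "u \<noteq> v" "\<not> starE n u v"
  then have "star_edge u v \<or> star_edge v u" unfolding starE_def by blast
  then show "compatible_walk (starV n) (starE n) (star_transitions n) u v \<or>
      compatible_walk (starV n) (starE n) (star_transitions n) v u"
    using star_transitions_walk \<open>u \<in> starV n\<close> \<open>v \<in> starV n\<close> by blast
qed

definition star_parent :: "nat \<times> nat \<Rightarrow> nat \<times> nat" where
  "star_parent x = (if snd x = 1 then (0, 0) else (fst x, snd x - 1))"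

lemma star_parent_forest:
  "\<forall>x\<in>{1..n} \<times> {1..3}.
     star_parent x \<in> starV n \<and> snd (star_parent x) < snd x \<and> \<not> starE n x (star_parent x)"
proof
  fix x assume "x \<in> {1..n} \<times> {1..3::nat}"
  then obtain i j where x: "x = (i, j)" "1 \<le> i" "i \<le> n" "j = 1 \<or> j = 2 \<or> j = 3" by force
  then have "star_edge (star_parent x) x" by (auto simp: star_parent_def star_edge_def)
  moreover have "star_parent x \<in> starV n" "snd (star_parent x) < snd x"
    using x by (auto simp: star_parent_def starV_def)
  ultimately show
    "star_parent x \<in> starV n \<and> snd (star_parent x) < snd x \<and> \<not> starE n x (star_parent x)"
    by (simp add: starE_def)
qed

lemma connecting_transition_set_star_card_lower_bound:
  assumes "connecting_transition_set (starV n) (starE n) T"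
  shows "2 * n \<le> card T"
proof -
  have "2 * card ({1..n} \<times> {1..3::nat}) \<le> 3 * card T"
    by (rule connecting_transition_set_card_lower_bound[OF simple_graph_star assms _ star_parent_forest])
       (auto simp: starV_def)
  then show ?thesis by (simp add: card_cartesian_product)
qed

theorem mainTheorem9:
  fixes n :: nat
  assumes "n \<ge> 1"
  shows "tau (starV n) (starE n) = 3 * n - 1 \<and>
         (\<exists>T. connecting_transition_set (starV n) (starE n) T \<and> card T = 2 * n) \<and>
         (\<forall>T. connecting_transition_set (starV n) (starE n) T \<longrightarrow> 2 * n \<le> card T)"
  using tau_star[OF assms] connecting_star_transitions card_star_transitions connecting_transition_set_star_card_lower_bound
  by blast

end
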